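(* Let $f$, $u_{0s}$, $c_0$, $b_0$, $p$ be as in the context and assume $M:=\sup_{x\le0}|b_0(x)c_0(x)|<\infty$. Then for every $\sigma\in\mathbb{C}$ with $\Re(\sigma)>M/c_0(0)$, $$\int_{-\infty}^{0}b_0(\xi)e^{-\sigma p(\xi)}\,d\xi\neq c_0(0);$$ that is, there are no eigenvalues (roots of the dispersion relation) with real part exceeding $M/c_0(0)$.
   Context: Let $q>0$ and let $f:(-\infty,0]\times(0,\infty)\to[0,\infty)$ be such that for each $u>0$, $x\mapsto f(x,u)$ is continuous and integrable, $\partial f/\partial u$ exists and is continuous, and $\int_{-\infty}^0 f(x,u)\,dx=q/2$ independently of $u$. Let $u_{0s}=2\sqrt q$. Define $c_0(x)=\sqrt{2\int_{-\infty}^x f(y,u_{0s})\,dy}$ for $x\le0$ (so $c_0(0)=u_{0s}/2$), and assume $c_0(x)>0$ for all $x\le0$. Define $b_0(x)=\frac{\partial f}{\partial u}(x,u_{0s})+\frac{f(x,u_{0s})}{2c_0(x)}$ and $p(x)=\int_x^0 dy/c_0(y)$. An eigenvalue is a $\sigma$ with $\Re\sigma>0$ satisfying $\int_{-\infty}^{0}b_0(\xi)e^{-\sigma p(\xi)}d\xi=c_0(0)$. *)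

theory Defs
  imports "HOL-Analysis.Analysis"
begin

text \<open>Setting: f :: real => real => real, f x u for x <= 0, u > 0; fu x u is the
partial derivative of f in u.\<close>

definition u0s :: "real \<Rightarrow> real" where
  "u0s q = 2 * sqrt q"

definition c0 :: "(real \<Rightarrow> real \<Rightarrow> real) \<Rightarrow> real \<Rightarrow> real \<Rightarrow> real" where
  "c0 f q x = sqrt (2 * integral {..x} (\<lambda>y. f y (u0s q)))"

definition b0 :: "(real \<Rightarrow> real \<Rightarrow> real) \<Rightarrow> (real \<Rightarrow> real \<Rightarrow> real) \<Rightarrow> real \<Rightarrow> real \<Rightarrow> real" where
  "b0 f fu q x = fu x (u0s q) + f x (u0s q) / (2 * c0 f q x)"

definition pp :: "(real \<Rightarrow> real \<Rightarrow> real) \<Rightarrow> real \<Rightarrow> real \<Rightarrow> real" where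
  "pp f q x = integral {x..0} (\<lambda>y. 1 / c0 f q y)"

end

theory Submission
  imports Defs
begin

text \<open>Write \<open>s = Re \<sigma>\<close>. Since \<open>|b0 c0| \<le> M\<close>, the integrand is dominated by \<open>M e^{-s p}/c0\<close>,
and because \<open>p' = -1/c0\<close> this majorant is the derivative of \<open>(M/s) e^{-s p}\<close>. Its integral over
\<open>(-\<infinity>, 0]\<close> is therefore at most \<open>M/s\<close>, which is smaller than \<open>c0 0\<close> as soon as \<open>s > M / c0 0\<close>.\<close>

lemma integrable_on_atMost_subset_nonneg:
  fixes h :: "real \<Rightarrow> real"
  assumes "h integrable_on {..b}" "\<And>x. x \<le> b \<Longrightarrow> h x \<ge> 0" "x \<le> b"
  shows "h integrable_on {..x}"
proof -
  have "h absolutely_integrable_on {..b}"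
    using assms by (intro nonnegative_absolutely_integrable_1) auto
  then have "h absolutely_integrable_on {..x}"
    by (rule set_integrable_subset) (use assms in auto)
  then show ?thesis
    using absolutely_integrable_on_def by blast
qed

lemma integral_atMost_split:
  fixes h :: "real \<Rightarrow> real"
  assumes "h integrable_on {..a}" "h integrable_on {a..x}" "a \<le> x"
  shows "integral {..x} h = integral {..a} h + integral {a..x} h"
proof -
  have "(h has_integral (integral {..a} h + integral {a..x} h)) ({..a} \<union> {a..x})"
  proof (rule has_integral_Un)
    show "negligible ({..a} \<inter> {a..x})"
      by (rule negligible_subset[OF negligible_sing[of a]]) auto
  qed (use assms in \<open>simp_all add: integrable_integral\<close>)
  moreover have "{..a} \<union> {a..x} = {..x}"
    using assms(3) by auto
  ultimately show ?thesis
    by (metis integral_unique)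
qed

lemma continuous_on_atMost_if_Icc:
  fixes f :: "real \<Rightarrow> 'a::topological_space"
  assumes "\<And>a. a \<le> b \<Longrightarrow> continuous_on {a..b} f"
  shows "continuous_on {..b} f"
  unfolding continuous_on_eq_continuous_within
proof
  fix x assume x: "x \<in> {..b}"
  have "at x within {..b} = at x within {x - 1..b}"
    by (rule at_within_nhd[of _ "{x - 1<..}"]) auto
  moreover have "continuous (at x within {x - 1..b}) f"
    using assms[of "x - 1"] x by (simp add: continuous_on_eq_continuous_within)
  ultimately show "continuous (at x within {..b}) f"
    by simp
qed

lemma continuous_on_integral_atMost:
  fixes h :: "real \<Rightarrow> real"
  assumes "h integrable_on {..b}" "\<And>x. x \<le> b \<Longrightarrow> h x \<ge> 0"
  shows "continuous_on {..b} (\<lambda>x. integral {..x} h)"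
proof (rule continuous_on_atMost_if_Icc)
  fix a assume a: "a \<le> b"
  have "continuous_on {a..b} (\<lambda>x. integral {..a} h + integral {a..x} h)"
    using integrable_on_subinterval[OF assms(1), of a b]
    by (intro continuous_on_add continuous_on_const indefinite_integral_continuous_1) auto
  moreover have "integral {..a} h + integral {a..x} h = integral {..x} h" if x: "x \<in> {a..b}" for x
  proof (rule integral_atMost_split[symmetric])
    show "h integrable_on {..a}"
      using assms a by (rule integrable_on_atMost_subset_nonneg)
    show "h integrable_on {a..x}"
      using x by (intro integrable_on_subinterval[OF assms(1)]) auto
  qed (use x in simp)
  ultimately show "continuous_on {a..b} (\<lambda>x. integral {..x} h)"
    by (rule continuous_on_eq)
qed

lemma has_real_derivative_integral_lower:
  fixes r :: "real \<Rightarrow> real"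
  assumes "continuous_on {a..b} r" "x \<in> {a..b}"
  shows "((\<lambda>y. integral {y..b} r) has_real_derivative - r x) (at x within {a..b})"
proof -
  have "((\<lambda>y. integral {a..y} r) has_real_derivative r x) (at x within {a..b})"
    unfolding has_real_derivative_iff_has_vector_derivative
    by (rule integral_has_vector_derivative[OF assms])
  then have "((\<lambda>y. integral {a..b} r - integral {a..y} r) has_real_derivative - r x) (at x within {a..b})"
    using DERIV_diff[OF DERIV_const] by fastforce
  moreover have "integral {a..b} r - integral {a..y} r = integral {y..b} r" if "y \<in> {a..b}" for y
    using that Henstock_Kurzweil_Integration.integral_combine[OF _ _ integrable_continuous_real[OF assms(1)]]
    by (metis add_diff_cancel_left' atLeastAtMost_iff)
  ultimately show ?thesis
    by (rule has_field_derivative_transform_within[OF _ zero_less_one assms(2)]) simp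
qed

text \<open>Monotone convergence along the intervals \<open>[-k, b]\<close>.\<close>

lemma integral_atMost_le_if_Icc_le:
  fixes g :: "real \<Rightarrow> real"
  assumes nonneg: "\<And>x. x \<le> b \<Longrightarrow> g x \<ge> 0"
    and Icc: "\<And>a. a \<le> b \<Longrightarrow> \<exists>I. (g has_integral I) {a..b} \<and> I \<le> B"
  shows "g integrable_on {..b} \<and> integral {..b} g \<le> B"
proof -
  define gk where "gk = (\<lambda>k::nat. \<lambda>x. if x \<in> {min b (- real k)..b} then g x else 0)"
  have gk_bound: "gk k integrable_on {..b} \<and> integral {..b} (gk k) \<le> B" for k
  proof -
    obtain I where "(g has_integral I) {min b (- real k)..b}" "I \<le> B"
      using Icc[of "min b (- real k)"] by auto
    then have "(gk k has_integral I) {..b}"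
      unfolding gk_def by (subst has_integral_restrict) auto
    with \<open>I \<le> B\<close> show ?thesis
      by (auto simp: integral_unique)
  qed
  have gk_lim: "(\<lambda>k. gk k x) \<longlonglongrightarrow> g x" if "x \<in> {..b}" for x
  proof (rule tendsto_eventually)
    have "\<forall>\<^sub>F k in sequentially. real k \<ge> - x"
      using filterlim_real_sequentially by (simp add: filterlim_at_top)
    then show "\<forall>\<^sub>F k in sequentially. gk k x = g x"
      by eventually_elim (use that in \<open>auto simp: gk_def\<close>)
  qed
  have "g integrable_on {..b} \<and> (\<lambda>k. integral {..b} (gk k)) \<longlonglongrightarrow> integral {..b} g"
  proof (rule monotone_convergence_increasing)
    show "bounded (range (\<lambda>k. integral {..b} (gk k)))"
    proof (unfold bounded_iff, intro exI[of _ B] ballI)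
      fix y assume "y \<in> range (\<lambda>k. integral {..b} (gk k))"
      then obtain k where y: "y = integral {..b} (gk k)"
        by blast
      have "0 \<le> y"
        unfolding y using gk_bound nonneg by (intro integral_nonneg) (auto simp: gk_def)
      then show "norm y \<le> B"
        using gk_bound y by simp
    qed
  qed (use gk_bound gk_lim nonneg in \<open>auto simp: gk_def\<close>)
  moreover have "\<exists>N. \<forall>k\<ge>N. integral {..b} (gk k) \<le> B"
    using gk_bound by blast
  ultimately show ?thesis
    using LIMSEQ_le_const2 by blast
qed

lemma integral_exp_weight_le:
  fixes c :: "real \<Rightarrow> real"
  assumes cont: "continuous_on {..b} c" and pos: "\<And>x. x \<le> b \<Longrightarrow> c x > 0" and "s > 0"
  defines "p \<equiv> \<lambda>x. integral {x..b} (\<lambda>y. 1 / c y)"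
  shows "(\<lambda>x. exp (- s * p x) / c x) integrable_on {..b}
    \<and> integral {..b} (\<lambda>x. exp (- s * p x) / c x) \<le> 1 / s"
proof (rule integral_atMost_le_if_Icc_le)
  fix a assume a: "a \<le> b"
  define G where "G = (\<lambda>x. exp (- s * p x) / s)"
  have "continuous_on {a..b} (\<lambda>y. 1 / c y)"
    using cont pos by (intro continuous_on_divide continuous_on_const continuous_on_subset[OF cont])
      (auto simp: less_imp_neq[symmetric])
  then have "((\<lambda>x. exp (- s * p x) / c x) has_integral G b - G a) {a..b}"
  proof (intro fundamental_theorem_of_calculus[OF a])
    fix x assume x: "x \<in> {a..b}" and r: "continuous_on {a..b} (\<lambda>y. 1 / c y)"
    have "(G has_real_derivative exp (- s * p x) / c x) (at x within {a..b})"
      unfolding G_def p_def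
      by (rule derivative_eq_intros has_real_derivative_integral_lower[OF r x] refl)+
        (use \<open>s > 0\<close> in \<open>auto simp: field_simps\<close>)
    then show "(G has_vector_derivative exp (- s * p x) / c x) (at x within {a..b})"
      by (simp add: has_real_derivative_iff_has_vector_derivative)
  qed
  moreover have "G b - G a \<le> 1 / s"
    using \<open>s > 0\<close> by (simp add: G_def p_def)
  ultimately show "\<exists>I. ((\<lambda>x. exp (- s * p x) / c x) has_integral I) {a..b} \<and> I \<le> 1 / s"
    by blast
qed (use pos in \<open>auto intro: less_imp_le\<close>)

theorem theorem2:
  fixes f fu :: "real \<Rightarrow> real \<Rightarrow> real" and q :: real
  assumes q_pos: "q > 0"
    and f_nonneg: "\<And>x u. x \<le> 0 \<Longrightarrow> u > 0 \<Longrightarrow> f x u \<ge> 0"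
    and f_cont: "\<And>u. u > 0 \<Longrightarrow> continuous_on {..0} (\<lambda>x. f x u)"
    and f_int: "\<And>u. u > 0 \<Longrightarrow> (\<lambda>x. f x u) integrable_on {..0}"
    and f_mass: "\<And>u. u > 0 \<Longrightarrow> integral {..0} (\<lambda>x. f x u) = q / 2"
    and fu_deriv: "\<And>x u. x \<le> 0 \<Longrightarrow> u > 0 \<Longrightarrow> ((\<lambda>v. f x v) has_real_derivative fu x u) (at u)"
    and fu_cont: "\<And>u. u > 0 \<Longrightarrow> continuous_on {..0} (\<lambda>x. fu x u)"
    and c0_pos: "\<And>x. x \<le> 0 \<Longrightarrow> c0 f q x > 0"
    and M_fin: "bdd_above ((\<lambda>x. \<bar>b0 f fu q x * c0 f q x\<bar>) ` {..0})"
  shows "\<forall>\<sigma>::complex. Re \<sigma> > (SUP x\<in>{..0::real}. \<bar>b0 f fu q x * c0 f q x\<bar>) / c0 f q 0 \<longrightarrow>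
           \<not> ((\<lambda>\<xi>. complex_of_real (b0 f fu q \<xi>) * exp (- \<sigma> * complex_of_real (pp f q \<xi>)))
                 has_integral complex_of_real (c0 f q 0)) {..0}"
proof (intro allI impI notI)
  fix \<sigma> :: complex
  define M where "M = (SUP x\<in>{..0::real}. \<bar>b0 f fu q x * c0 f q x\<bar>)"
  define s where "s = Re \<sigma>"
  define w where "w = (\<lambda>x. exp (- s * pp f q x) / c0 f q x)"
  assume s_gt: "M / c0 f q 0 < Re \<sigma>"
    and eigen: "((\<lambda>\<xi>. complex_of_real (b0 f fu q \<xi>) * exp (- \<sigma> * complex_of_real (pp f q \<xi>)))
                 has_integral complex_of_real (c0 f q 0)) {..0}"
  have M_ge: "\<bar>b0 f fu q x\<bar> * c0 f q x \<le> M" if "x \<le> 0" for x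
    using cSUP_upper[OF _ M_fin, of x] that c0_pos[OF that] by (simp add: M_def abs_mult)
  have c0_0: "0 < c0 f q 0"
    using c0_pos by simp
  have "0 \<le> M"
    using M_ge[of 0] c0_0 by (meson abs_ge_zero less_imp_le mult_nonneg_nonneg order_trans order_refl)
  then have "0 < s"
    using s_gt c0_0 unfolding s_def by (meson divide_nonneg_pos le_less_trans)
  have Ms: "M / s < c0 f q 0"
    using s_gt c0_0 \<open>0 < s\<close> unfolding s_def by (simp add: pos_divide_less_eq mult.commute)
  have c0_cont: "continuous_on {..0} (\<lambda>x. c0 f q x)"
    unfolding c0_def using q_pos
    by (intro continuous_on_real_sqrt continuous_on_mult continuous_on_const
        continuous_on_integral_atMost f_int f_nonneg) (auto simp: u0s_def)
  have w: "w integrable_on {..0} \<and> integral {..0} w \<le> 1 / s"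
    using integral_exp_weight_le[OF c0_cont c0_pos \<open>0 < s\<close>] by (simp add: w_def pp_def)
  have "norm (integral {..0} (\<lambda>\<xi>. complex_of_real (b0 f fu q \<xi>) * exp (- \<sigma> * complex_of_real (pp f q \<xi>))))
        \<le> integral {..0} (\<lambda>x. M * w x)"
  proof (rule integral_norm_bound_integral)
    show "(\<lambda>\<xi>. complex_of_real (b0 f fu q \<xi>) * exp (- \<sigma> * complex_of_real (pp f q \<xi>))) integrable_on {..0}"
      using eigen by blast
    show "(\<lambda>x. M * w x) integrable_on {..0}"
      using w integrable_on_mult_right by blast
    fix x :: real assume "x \<in> {..0}"
    then have "\<bar>b0 f fu q x\<bar> \<le> M / c0 f q x"
      using M_ge c0_pos by (simp add: pos_le_divide_eq)
    then have "\<bar>b0 f fu q x\<bar> * exp (- s * pp f q x) \<le> M / c0 f q x * exp (- s * pp f q x)"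
      by (rule mult_right_mono) simp
    then show "norm (complex_of_real (b0 f fu q x) * exp (- \<sigma> * complex_of_real (pp f q x))) \<le> M * w x"
      by (simp add: norm_mult w_def s_def)
  qed
  also have "\<dots> \<le> M / s"
    using mult_left_mono[OF conjunct2[OF w] \<open>0 \<le> M\<close>] by simp
  finally show False
    using Ms c0_0 integral_unique[OF eigen] by simp
qed

end
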